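(* Let $f\colon M^n\to\mathbb{R}^m$ be an isometric immersion and $F\colon(-\varepsilon,\varepsilon)\times M^n\to\mathbb{R}^m$ a conformal infinitesimal variation of $f$ with conformal infinitesimal bending $\mathcal{T}=F_*\partial_t|_{t=0}$ and conformal factor $\rho$. Let $\alpha^t$ be the second fundamental form of $f_t=F(t,\cdot)$. Then $\langle\frac{\partial}{\partial t}|_{t=0}\alpha^t(X,Y),\eta\rangle=\langle\beta(X,Y)+\rho\alpha(X,Y),\eta\rangle$ for all $X,Y\in\mathfrak{X}(M)$ and all normal sections $\eta$ of $f$.
   Context: A conformal infinitesimal variation of $f$ is a smooth $F$ with $f_t=F(t,\cdot)$ immersions, $f_0=f$, and a positive $\gamma\in C^\infty((-\varepsilon,\varepsilon)\times M)$, $\gamma(0,\cdot)=1$, such that $\frac{\partial}{\partial t}|_{t=0}(\gamma\langle f_{t*}X,f_{t*}Y\rangle)=0$ for all $X,Y$. Then $\mathcal{T}$ satisfies $\langle\tilde\nabla_X\mathcal{T},f_*Y\rangle+\langle f_*X,\tilde\nabla_Y\mathcal{T}\rangle=2\rho\langle X,Y\rangle$ with conformal factor $\rho=-\frac12\partial_t\gamma(0,\cdot)$. Here $\tilde\nabla$ is the Euclidean connection, $\nabla$ the Levi-Civita connection of $M$, $\alpha$ the second fundamental form of $f$, and $\beta(X,Y)=(\tilde\nabla_X\tilde\nabla_Y\mathcal{T}-\tilde\nabla_{\nabla_XY}\mathcal{T})_{N_fM}-\rho\alpha(X,Y)$. *)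

theory Defs
  imports "HOL-Analysis.Analysis"
begin

text \<open>Local (chart) setting: the manifold M^n is represented by an open set
U of real^'n (a coordinate chart); vector fields are smooth maps U -> real^'n.\<close>

primrec Ck :: "nat \<Rightarrow> 'a::real_normed_vector set \<Rightarrow> ('a \<Rightarrow> 'b::real_normed_vector) \<Rightarrow> bool" where
  "Ck 0 S f = continuous_on S f"
| "Ck (Suc k) S f = (\<exists>f'. (\<forall>x\<in>S. (f has_derivative f' x) (at x)) \<and> (\<forall>v. Ck k S (\<lambda>x. f' x v)))"

definition smooth_on :: "'a::real_normed_vector set \<Rightarrow> ('a \<Rightarrow> 'b::real_normed_vector) \<Rightarrow> bool" where
  "smooth_on S f \<longleftrightarrow> (\<forall>k. Ck k S f)"

definition dF :: "(real \<times> (real^'n) \<Rightarrow> real^'m) \<Rightarrow> real \<Rightarrow> real^'n \<Rightarrow> real^'n \<Rightarrow> real^'m" where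
  "dF F t x v = frechet_derivative (\<lambda>y. F (t, y)) (at x) v"

definition nproj :: "(real \<times> (real^'n) \<Rightarrow> real^'m) \<Rightarrow> real \<Rightarrow> real^'n \<Rightarrow> real^'m \<Rightarrow> real^'m" where
  "nproj F t x w = (THE u. (\<forall>v. u \<bullet> dF F t x v = 0) \<and> w - u \<in> range (dF F t x))"

definition Dir :: "(real^'n \<Rightarrow> 'b::real_normed_vector) \<Rightarrow> (real^'n \<Rightarrow> real^'n) \<Rightarrow> real^'n \<Rightarrow> 'b" where
  "Dir V X x = frechet_derivative V (at x) (X x)"

definition sff :: "(real \<times> (real^'n) \<Rightarrow> real^'m) \<Rightarrow> real \<Rightarrow> (real^'n \<Rightarrow> real^'n) \<Rightarrow> (real^'n \<Rightarrow> real^'n) \<Rightarrow> real^'n \<Rightarrow> real^'m" where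
  "sff F t X Y x = nproj F t x (Dir (\<lambda>y. dF F t y (Y y)) X x)"

definition gmet :: "(real \<times> (real^'n) \<Rightarrow> real^'m) \<Rightarrow> real^'n \<Rightarrow> real^'n \<Rightarrow> real^'n \<Rightarrow> real" where
  "gmet F x v w = dF F 0 x v \<bullet> dF F 0 x w"

text \<open>Christoffel symbols of the induced metric (Koszul formula for coordinate fields).\<close>
definition christoffel :: "(real \<times> (real^'n) \<Rightarrow> real^'m) \<Rightarrow> real^'n \<Rightarrow> real^'n \<Rightarrow> real^'n \<Rightarrow> real^'n" where
  "christoffel F x v w = (THE u. \<forall>z. gmet F x u z =
      (1/2) * (frechet_derivative (\<lambda>y. gmet F y w z) (at x) v
             + frechet_derivative (\<lambda>y. gmet F y v z) (at x) w
             - frechet_derivative (\<lambda>y. gmet F y v w) (at x) z))"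

definition LC :: "(real \<times> (real^'n) \<Rightarrow> real^'m) \<Rightarrow> (real^'n \<Rightarrow> real^'n) \<Rightarrow> (real^'n \<Rightarrow> real^'n) \<Rightarrow> real^'n \<Rightarrow> real^'n" where
  "LC F X Y x = Dir Y X x + christoffel F x (X x) (Y x)"

definition bending :: "(real \<times> (real^'n) \<Rightarrow> real^'m) \<Rightarrow> real^'n \<Rightarrow> real^'m" where
  "bending F x = frechet_derivative F (at (0, x)) (1, 0)"

definition cfactor :: "(real \<times> (real^'n) \<Rightarrow> real) \<Rightarrow> real^'n \<Rightarrow> real" where
  "cfactor \<gamma> x = - (1/2) * frechet_derivative \<gamma> (at (0, x)) (1, 0)"

definition betaT :: "(real \<times> (real^'n) \<Rightarrow> real^'m) \<Rightarrow> (real \<times> (real^'n) \<Rightarrow> real) \<Rightarrow> (real^'n \<Rightarrow> real^'n) \<Rightarrow> (real^'n \<Rightarrow> real^'n) \<Rightarrow> real^'n \<Rightarrow> real^'m" where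
  "betaT F \<gamma> X Y x = nproj F 0 x (Dir (Dir (bending F) Y) X x - Dir (bending F) (LC F X Y) x)
      - cfactor \<gamma> x *\<^sub>R sff F 0 X Y x"

end

(*
  Near t = 0 the second fundamental form of f_t at x is the normal part w_t - A_t c_t of
  w_t = D_X (f_t* Y), where A_t = f_t*(x) and the tangential coefficients c_t solve the Gram
  system of A_t, hence depend differentiably on t (Cramer's rule). Differentiating at t = 0 and
  pairing with a normal field eta of f kills the term A_0 c_t', leaving <w' - A' c_0, eta>.
  Because partial derivatives of F commute, w' = D_X D_Y T and A' = D T, and by the Gauss
  formula c_0 = nabla_X Y. So the derivative pairs with eta like the normal part of
  D_X D_Y T - D_(nabla_X Y) T, which is beta + rho alpha by the definition of beta.
*)
theory Submission
  imports Defs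
begin

lemma Ck_cong:
  assumes "open S" "\<And>x. x \<in> S \<Longrightarrow> f x = g x" "Ck k S f"
  shows "Ck k S g"
  using assms
proof (induction k arbitrary: f g)
  case 0
  then show ?case using continuous_on_cong by fastforce
next
  case (Suc k)
  from Suc.prems(3) obtain f' where "\<forall>x\<in>S. (f has_derivative f' x) (at x)"
    and "\<forall>v. Ck k S (\<lambda>x. f' x v)" by auto
  with Suc.prems(1,2) show ?case
    by (metis Ck.simps(2) has_derivative_transform_within_open)
qed

lemma smooth_on_imp_continuous_on: "smooth_on S f \<Longrightarrow> continuous_on S f"
  unfolding smooth_on_def by (metis Ck.simps(1))

lemma smooth_on_has_derivative:
  assumes "smooth_on S f" "p \<in> S"
  shows "(f has_derivative frechet_derivative f (at p)) (at p)"
proof -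
  from assms(1) have "Ck (Suc 0) S f" unfolding smooth_on_def by blast
  with assms(2) show ?thesis by (metis Ck.simps(2) frechet_derivative_at)
qed

lemma smooth_on_frechet_derivative:
  assumes "open S" "smooth_on S f"
  shows "smooth_on S (\<lambda>q. frechet_derivative f (at q) v)"
  unfolding smooth_on_def
proof
  fix k
  from assms(2) have "Ck (Suc k) S f" unfolding smooth_on_def by blast
  then obtain f' where d: "\<forall>x\<in>S. (f has_derivative f' x) (at x)"
    and c: "\<forall>v. Ck k S (\<lambda>x. f' x v)" by auto
  show "Ck k S (\<lambda>q. frechet_derivative f (at q) v)"
    by (rule Ck_cong[OF assms(1) _ c[rule_format, of v]]) (metis d frechet_derivative_at)
qed

lemma mvt_along_direction:
  fixes f :: "'a::real_normed_vector \<Rightarrow> real"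
  assumes "0 < h" and line: "\<And>s. s \<in> {0..h} \<Longrightarrow> p + s *\<^sub>R a \<in> S"
    and f': "\<And>q. q \<in> S \<Longrightarrow> (f has_derivative f' q) (at q)"
  shows "\<exists>\<sigma>\<in>{0<..<h}. f (p + h *\<^sub>R a) - f p = h * f' (p + \<sigma> *\<^sub>R a) a"
proof -
  have "((\<lambda>s. f (p + s *\<^sub>R a)) has_derivative (\<lambda>u. u * f' (p + s *\<^sub>R a) a)) (at s within {0..h})"
    if "0 \<le> s" "s \<le> h" for s
  proof -
    have q: "p + s *\<^sub>R a \<in> S" using line that by simp
    have "((\<lambda>s. f (p + s *\<^sub>R a)) has_derivative (\<lambda>u. f' (p + s *\<^sub>R a) (u *\<^sub>R a))) (at s within {0..h})"
      by (rule has_derivative_compose[where f = "\<lambda>s. p + s *\<^sub>R a" and g = f, OF _ f'[OF q]])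
         (auto intro!: derivative_eq_intros)
    then show ?thesis
      using linear_scale[OF has_derivative_linear[OF f'[OF q]]] by (simp add: mult.commute)
  qed
  from mvt_simple[OF \<open>0 < h\<close> this] show ?thesis by (auto simp: mult.commute)
qed

lemma second_difference_mvt:
  fixes f :: "'a::real_normed_vector \<Rightarrow> real"
  assumes "0 < h"
    and square: "\<And>s t. s \<in> {0..h} \<Longrightarrow> t \<in> {0..h} \<Longrightarrow> p + s *\<^sub>R a + t *\<^sub>R b \<in> S"
    and f': "\<And>q. q \<in> S \<Longrightarrow> (f has_derivative f' q) (at q)"
    and fa: "\<And>q. q \<in> S \<Longrightarrow> ((\<lambda>q. f' q a) has_derivative fa q) (at q)"
  shows "\<exists>\<sigma>\<in>{0<..<h}. \<exists>\<tau>\<in>{0<..<h}.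
    f (p + h *\<^sub>R a + h *\<^sub>R b) - f (p + h *\<^sub>R a) - f (p + h *\<^sub>R b) + f p
      = h * h * fa (p + \<sigma> *\<^sub>R a + \<tau> *\<^sub>R b) b"
proof -
  let ?S' = "{q. q \<in> S \<and> q + h *\<^sub>R b \<in> S}"
  have "((\<lambda>q. f (q + h *\<^sub>R b) - f q) has_derivative (\<lambda>v. f' (q + h *\<^sub>R b) v - f' q v)) (at q)"
    if "q \<in> ?S'" for q
    using that by (auto intro!: derivative_eq_intros f' has_derivative_compose[where g = f])
  moreover have "p + s *\<^sub>R a \<in> ?S'" if "s \<in> {0..h}" for s
    using square[OF that, of 0] square[OF that, of h] \<open>0 < h\<close> by simp
  ultimately obtain \<sigma> where \<sigma>: "\<sigma> \<in> {0<..<h}" and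
    g: "f (p + h *\<^sub>R a + h *\<^sub>R b) - f (p + h *\<^sub>R a) - (f (p + h *\<^sub>R b) - f p)
      = h * (f' (p + \<sigma> *\<^sub>R a + h *\<^sub>R b) a - f' (p + \<sigma> *\<^sub>R a) a)"
    using mvt_along_direction[OF \<open>0 < h\<close>, of p a ?S' "\<lambda>q. f (q + h *\<^sub>R b) - f q"
        "\<lambda>q v. f' (q + h *\<^sub>R b) v - f' q v"] by auto
  have "p + \<sigma> *\<^sub>R a + t *\<^sub>R b \<in> S" if "t \<in> {0..h}" for t
    using square[OF _ that, of \<sigma>] \<sigma> by simp
  then obtain \<tau> where \<tau>: "\<tau> \<in> {0<..<h}" and
    "f' (p + \<sigma> *\<^sub>R a + h *\<^sub>R b) a - f' (p + \<sigma> *\<^sub>R a) a = h * fa (p + \<sigma> *\<^sub>R a + \<tau> *\<^sub>R b) b"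
    using mvt_along_direction[OF \<open>0 < h\<close>, of "p + \<sigma> *\<^sub>R a" b S "\<lambda>q. f' q a" fa] fa by blast
  with g have "f (p + h *\<^sub>R a + h *\<^sub>R b) - f (p + h *\<^sub>R a) - f (p + h *\<^sub>R b) + f p
      = h * h * fa (p + \<sigma> *\<^sub>R a + \<tau> *\<^sub>R b) b"
    by (simp add: algebra_simps)
  with \<sigma> \<tau> show ?thesis by blast
qed

lemma small_square_near:
  fixes a b p :: "'a::real_normed_vector"
  assumes "r > 0"
  obtains h where "h > 0"
    "\<And>s t. s \<in> {0..h} \<Longrightarrow> t \<in> {0..h} \<Longrightarrow> dist (p + s *\<^sub>R a + t *\<^sub>R b) p < r"
proof
  define c where "c = norm a + norm b + 1"
  have "c > 0" unfolding c_def using norm_ge_zero[of a] norm_ge_zero[of b] by linarith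
  define h where "h = r / (2 * c)"
  show "h > 0" using \<open>r > 0\<close> \<open>c > 0\<close> by (simp add: h_def)
  have "h * (norm a + norm b) < h * c" using \<open>h > 0\<close> by (simp add: c_def)
  moreover have "h * c = r / 2" using \<open>c > 0\<close> by (simp add: h_def)
  ultimately have "h * (norm a + norm b) < r" using \<open>r > 0\<close> by linarith
  fix s t assume "s \<in> {0..h}" "t \<in> {0..h}"
  then have "dist (p + s *\<^sub>R a + t *\<^sub>R b) p \<le> s * norm a + t * norm b"
    using norm_triangle_ineq[of "s *\<^sub>R a" "t *\<^sub>R b"] by (simp add: dist_norm add.assoc)
  also have "\<dots> \<le> h * norm a + h * norm b"
    using \<open>s \<in> {0..h}\<close> \<open>t \<in> {0..h}\<close> by (intro add_mono mult_right_mono) auto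
  finally show "dist (p + s *\<^sub>R a + t *\<^sub>R b) p < r"
    using \<open>h * (norm a + norm b) < r\<close> by (simp add: distrib_left)
qed

lemma mixed_partials_eq:
  fixes f :: "'a::real_normed_vector \<Rightarrow> real"
  assumes "open S" "p \<in> S"
    and f': "\<And>q. q \<in> S \<Longrightarrow> (f has_derivative f' q) (at q)"
    and fa: "\<And>q. q \<in> S \<Longrightarrow> ((\<lambda>q. f' q a) has_derivative fa q) (at q)"
    and fb: "\<And>q. q \<in> S \<Longrightarrow> ((\<lambda>q. f' q b) has_derivative fb q) (at q)"
    and "continuous (at p) (\<lambda>q. fa q b)" "continuous (at p) (\<lambda>q. fb q a)"
  shows "fa p b = fb p a"
proof (rule ccontr)
  assume "fa p b \<noteq> fb p a"
  define d where "d = dist (fa p b) (fb p a) / 2"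
  have "d > 0" using \<open>fa p b \<noteq> fb p a\<close> by (simp add: d_def)
  have "\<forall>\<^sub>F q in nhds p. q \<in> S \<and> dist (fa q b) (fa p b) < d \<and> dist (fb q a) (fb p a) < d"
    using assms(1,2,6,7) \<open>d > 0\<close>
    by (intro eventually_conj eventually_nhds_in_open)
       (auto simp: continuous_at tendsto_iff eventually_nhds_conv_at)
  then obtain r where "r > 0" and r: "\<And>q. dist q p < r \<Longrightarrow>
      q \<in> S \<and> dist (fa q b) (fa p b) < d \<and> dist (fb q a) (fb p a) < d"
    unfolding eventually_nhds_metric by (auto simp: dist_commute)
  obtain h where "h > 0"
    and near: "\<And>s t. s \<in> {0..h} \<Longrightarrow> t \<in> {0..h} \<Longrightarrow> dist (p + s *\<^sub>R a + t *\<^sub>R b) p < r"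
    using small_square_near[OF \<open>r > 0\<close>] by blast
  have sq: "p + s *\<^sub>R a + t *\<^sub>R b \<in> S" "p + s *\<^sub>R b + t *\<^sub>R a \<in> S"
    if "s \<in> {0..h}" "t \<in> {0..h}" for s t
    using r near[OF that] near[OF that(2,1)] by (auto simp: add_ac)
  obtain \<sigma> \<tau> where \<sigma>\<tau>: "\<sigma> \<in> {0<..<h}" "\<tau> \<in> {0<..<h}"
    and "f (p + h *\<^sub>R a + h *\<^sub>R b) - f (p + h *\<^sub>R a) - f (p + h *\<^sub>R b) + f p
      = h * h * fa (p + \<sigma> *\<^sub>R a + \<tau> *\<^sub>R b) b"
    using second_difference_mvt[OF \<open>h > 0\<close> sq(1) f' fa] by blast
  moreover obtain \<sigma>' \<tau>' where \<sigma>\<tau>': "\<sigma>' \<in> {0<..<h}" "\<tau>' \<in> {0<..<h}"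
    and "f (p + h *\<^sub>R b + h *\<^sub>R a) - f (p + h *\<^sub>R b) - f (p + h *\<^sub>R a) + f p
      = h * h * fb (p + \<sigma>' *\<^sub>R b + \<tau>' *\<^sub>R a) a"
    using second_difference_mvt[OF \<open>h > 0\<close> sq(2) f' fb] by blast
  ultimately have "fa (p + \<sigma> *\<^sub>R a + \<tau> *\<^sub>R b) b = fb (p + \<sigma>' *\<^sub>R b + \<tau>' *\<^sub>R a) a"
    using \<open>h > 0\<close> by (simp add: algebra_simps)
  moreover have "dist (fa (p + \<sigma> *\<^sub>R a + \<tau> *\<^sub>R b) b) (fa p b) < d"
    "dist (fb (p + \<sigma>' *\<^sub>R b + \<tau>' *\<^sub>R a) a) (fb p a) < d"
    using r near[of \<sigma> \<tau>] near[of \<tau>' \<sigma>'] \<sigma>\<tau> \<sigma>\<tau>' by (auto simp: add_ac)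
  ultimately have "dist (fa p b) (fb p a) < 2 * d"
    using dist_triangle2[of "fa p b" "fb p a" "fa (p + \<sigma> *\<^sub>R a + \<tau> *\<^sub>R b) b"]
    by (simp add: dist_commute)
  then show False by (simp add: d_def)
qed

lemma smooth_on_frechet_derivative_commute:
  fixes f :: "'a::real_normed_vector \<Rightarrow> 'b::euclidean_space"
  assumes "open S" "smooth_on S f" "p \<in> S"
  shows "frechet_derivative (\<lambda>q. frechet_derivative f (at q) a) (at p) b
       = frechet_derivative (\<lambda>q. frechet_derivative f (at q) b) (at p) a"
proof (rule euclidean_eqI)
  fix e :: 'b
  let ?f' = "\<lambda>q. frechet_derivative f (at q)"
  let ?fa = "\<lambda>q. frechet_derivative (\<lambda>q. ?f' q a) (at q)"
  let ?fb = "\<lambda>q. frechet_derivative (\<lambda>q. ?f' q b) (at q)"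
  have sa: "smooth_on S (\<lambda>q. ?f' q a)" and sb: "smooth_on S (\<lambda>q. ?f' q b)"
    using smooth_on_frechet_derivative[OF assms(1,2)] by auto
  have inner_e: "(g has_derivative g') (at q) \<Longrightarrow> ((\<lambda>q. g q \<bullet> e) has_derivative (\<lambda>v. g' v \<bullet> e)) (at q)"
    for g :: "'a \<Rightarrow> 'b" and g' q
    by (rule bounded_linear.has_derivative[OF bounded_linear_inner_left])
  have cont: "continuous (at p) (\<lambda>q. frechet_derivative g (at q) v \<bullet> e)" if "smooth_on S g" for g :: "'a \<Rightarrow> 'b" and v
    using smooth_on_imp_continuous_on[OF smooth_on_frechet_derivative[OF assms(1) that]] assms(1,3)
    by (intro continuous_intros) (simp add: continuous_on_eq_continuous_at)
  show "?fa p b \<bullet> e = ?fb p a \<bullet> e"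
  proof (rule mixed_partials_eq[where f = "\<lambda>q. f q \<bullet> e" and f' = "\<lambda>q v. ?f' q v \<bullet> e"
        and fa = "\<lambda>q v. ?fa q v \<bullet> e" and fb = "\<lambda>q v. ?fb q v \<bullet> e", OF assms(1,3)])
    fix q assume "q \<in> S"
    show "((\<lambda>q. f q \<bullet> e) has_derivative (\<lambda>v. ?f' q v \<bullet> e)) (at q)"
      by (rule inner_e[OF smooth_on_has_derivative[OF assms(2) \<open>q \<in> S\<close>]])
    show "((\<lambda>q. ?f' q a \<bullet> e) has_derivative (\<lambda>v. ?fa q v \<bullet> e)) (at q)"
      by (rule inner_e[OF smooth_on_has_derivative[OF sa \<open>q \<in> S\<close>]])
    show "((\<lambda>q. ?f' q b \<bullet> e) has_derivative (\<lambda>v. ?fb q v \<bullet> e)) (at q)"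
      by (rule inner_e[OF smooth_on_has_derivative[OF sb \<open>q \<in> S\<close>]])
  qed (rule cont[OF sa], rule cont[OF sb])
qed

lemma frechet_derivative_eq_on_open:
  assumes "open S" "x \<in> S" "\<And>y. y \<in> S \<Longrightarrow> g y = h y" "(g has_derivative g') (at x)"
  shows "frechet_derivative h (at x) = g'"
proof -
  have "(h has_derivative g') (at x)"
    using has_derivative_transform_within_open[OF assms(4,1,2)] assms(3) by blast
  then show ?thesis using frechet_derivative_at by metis
qed

lemma linear_partial_snd:
  assumes "linear G'"
  shows "linear (\<lambda>v. G' (0, v))"
proof -
  have "linear (\<lambda>v. (0, v))" by (rule linearI) auto
  from linear_compose[OF this assms] show ?thesis by (simp add: o_def)
qed

lemma has_derivative_partial_snd:
  assumes "(G has_derivative G') (at (t, y))"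
  shows "((\<lambda>y. G (t, y)) has_derivative (\<lambda>v. G' (0, v))) (at y)"
proof -
  have "((\<lambda>y. (t, y)) has_derivative (\<lambda>v. (0, v))) (at y)"
    by (intro has_derivative_Pair has_derivative_const has_derivative_ident)
  from has_derivative_compose[OF this assms] show ?thesis by simp
qed

lemma has_vector_derivative_partial_fst:
  assumes "(G has_derivative G') (at (t, y))"
  shows "((\<lambda>t. G (t, y)) has_vector_derivative G' (1, 0)) (at t)"
proof -
  have "((\<lambda>t. (t, y)) has_derivative (\<lambda>s. (s, 0))) (at t)"
    by (intro has_derivative_Pair has_derivative_const has_derivative_ident)
  from has_derivative_compose[OF this assms]
  have "((\<lambda>t. G (t, y)) has_derivative (\<lambda>s. G' (s, 0))) (at t)" by simp
  moreover have "(\<lambda>s. G' (s, 0)) = (\<lambda>s. s *\<^sub>R G' (1, 0))"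
  proof
    fix s :: real
    have "G' (s, 0) = G' (s *\<^sub>R (1, 0))" by simp
    also have "\<dots> = s *\<^sub>R G' (1, 0)" by (rule linear_scale[OF has_derivative_linear[OF assms]])
    finally show "G' (s, 0) = s *\<^sub>R G' (1, 0)" .
  qed
  ultimately show ?thesis unfolding has_vector_derivative_def by simp
qed

lemma linear_basis_expansion:
  fixes L :: "real^'n \<Rightarrow> 'b::real_vector"
  assumes "linear L"
  shows "L v = (\<Sum>i\<in>UNIV. (v $ i) *\<^sub>R L (axis i 1))"
proof -
  have "L v = L (\<Sum>i\<in>UNIV. (v $ i) *\<^sub>R axis i 1)"
    using basis_expansion[of v] by (simp add: scalar_mult_eq_scaleR)
  also have "\<dots> = (\<Sum>i\<in>UNIV. (v $ i) *\<^sub>R L (axis i 1))"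
    using assms by (simp add: linear_sum linear_scale)
  finally show ?thesis .
qed

lemma has_derivative_apply_linear_family:
  fixes L :: "'a::real_normed_vector \<Rightarrow> real^'k \<Rightarrow> 'c::real_normed_vector"
  assumes "open U" "x \<in> U" and L: "\<And>y. y \<in> U \<Longrightarrow> linear (L y)"
    and M: "\<And>u. ((\<lambda>y. L y u) has_derivative M u) (at x)" and "\<And>v. linear (\<lambda>u. M u v)"
    and g: "(g has_derivative g') (at x)"
  shows "((\<lambda>y. L y (g y)) has_derivative (\<lambda>v. L x (g' v) + M (g x) v)) (at x)"
proof (rule has_derivative_transform_within_open[OF _ assms(1,2)])
  have "((\<lambda>y. g y $ i) has_derivative (\<lambda>v. g' v $ i)) (at x)" for i
    by (rule bounded_linear.has_derivative[OF bounded_linear_vec_nth g])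
  then have "((\<lambda>y. \<Sum>i\<in>UNIV. (g y $ i) *\<^sub>R L y (axis i 1)) has_derivative
      (\<lambda>v. \<Sum>i\<in>UNIV. (g x $ i) *\<^sub>R M (axis i 1) v + (g' v $ i) *\<^sub>R L x (axis i 1))) (at x)"
    by (intro has_derivative_sum has_derivative_scaleR M)
  moreover have "(\<Sum>i\<in>UNIV. (g x $ i) *\<^sub>R M (axis i 1) v + (g' v $ i) *\<^sub>R L x (axis i 1))
      = L x (g' v) + M (g x) v" for v
    using linear_basis_expansion[OF L[OF \<open>x \<in> U\<close>], of "g' v"]
      linear_basis_expansion[OF assms(5), of "g x"]
    by (simp add: sum.distrib)
  ultimately show "((\<lambda>y. \<Sum>i\<in>UNIV. (g y $ i) *\<^sub>R L y (axis i 1)) has_derivative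
      (\<lambda>v. L x (g' v) + M (g x) v)) (at x)" by simp
  show "(\<Sum>i\<in>UNIV. (g y $ i) *\<^sub>R L y (axis i 1)) = L y (g y)" if "y \<in> U" for y
    by (rule linear_basis_expansion[OF L[OF that], symmetric])
qed

lemma differentiable_det:
  fixes M :: "real \<Rightarrow> real^'n^'n"
  assumes "\<And>i j. (\<lambda>t. M t $ i $ j) differentiable (at t0)"
  shows "(\<lambda>t. det (M t)) differentiable (at t0)"
proof -
  have "(\<lambda>t. \<Prod>i\<in>UNIV. M t $ i $ p i) differentiable (at t0)" for p :: "'n \<Rightarrow> 'n"
  proof -
    have "\<forall>i. \<exists>D. ((\<lambda>t. M t $ i $ p i) has_derivative D) (at t0)"
      using assms unfolding differentiable_def by blast
    then obtain D where "\<And>i. ((\<lambda>t. M t $ i $ p i) has_derivative D i) (at t0)"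
      by metis
    from has_derivative_prod[of UNIV "\<lambda>i t. M t $ i $ p i", OF this] show ?thesis
      unfolding differentiable_def by blast
  qed
  then show ?thesis
    unfolding det_def by (intro differentiable_sum differentiable_mult differentiable_const) auto
qed

definition gram :: "(real^'n \<Rightarrow> real^'m) \<Rightarrow> real^'n^'n" where
  "gram A = (\<chi> i j. A (axis i 1) \<bullet> A (axis j 1))"

definition gram_rhs :: "(real^'n \<Rightarrow> real^'m) \<Rightarrow> real^'m \<Rightarrow> real^'n" where
  "gram_rhs A w = (\<chi> i. A (axis i 1) \<bullet> w)"

text \<open>Cramer's rule, so that the solution visibly depends differentiably on A and w.\<close>
definition gram_solve :: "(real^'n \<Rightarrow> real^'m) \<Rightarrow> real^'m \<Rightarrow> real^'n" where
  "gram_solve A w = (\<chi> k. det (\<chi> i j. if j = k then gram_rhs A w $ i else gram A $ i $ j) / det (gram A))"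

definition normal_part :: "(real^'n \<Rightarrow> real^'m) \<Rightarrow> real^'m \<Rightarrow> real^'m" where
  "normal_part A w = (THE u. (\<forall>v. u \<bullet> A v = 0) \<and> w - u \<in> range A)"

lemma nproj_eq_normal_part: "nproj F t x = normal_part (dF F t x)"
  by (simp add: fun_eq_iff nproj_def normal_part_def)

lemma gram_mult_nth:
  assumes "linear A"
  shows "(gram A *v c) $ i = A (axis i 1) \<bullet> A c"
  using linear_basis_expansion[OF assms, of c]
  by (simp add: matrix_vector_mult_def gram_def inner_sum_right mult.commute)

lemma orthogonal_linear_if_orthogonal_basis:
  fixes A :: "real^'n \<Rightarrow> real^'m"
  assumes "linear A" "\<And>i. A (axis i 1) \<bullet> u = 0"
  shows "A v \<bullet> u = 0"
  using linear_basis_expansion[OF assms(1), of v] assms(2) by (simp add: inner_sum_left)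

lemma det_gram_nonzero:
  fixes A :: "real^'n \<Rightarrow> real^'m"
  assumes "linear A" "inj A"
  shows "det (gram A) \<noteq> 0"
proof -
  have "inj ((*v) (gram A))"
  proof (rule injI)
    fix c d assume "gram A *v c = gram A *v d"
    then have "A (axis i 1) \<bullet> A c = A (axis i 1) \<bullet> A d" for i
      using gram_mult_nth[OF assms(1)] by metis
    then have "A (axis i 1) \<bullet> A (c - d) = 0" for i
      using assms(1) by (simp add: linear_diff inner_diff_right)
    then have "A (c - d) \<bullet> A (c - d) = 0"
      using orthogonal_linear_if_orthogonal_basis[OF assms(1)] by blast
    then have "A (c - d) = A 0" using assms(1) by (simp add: linear_0)
    then show "c = d" using assms(2) by (simp add: inj_eq)
  qed
  then show ?thesis using det_nz_iff_inj[of "\<lambda>c. gram A *v c"] by simp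
qed

lemma inner_gram_solve:
  fixes A :: "real^'n \<Rightarrow> real^'m"
  assumes "linear A" "inj A"
  shows "A z \<bullet> A (gram_solve A w) = A z \<bullet> w"
proof -
  have "gram A *v gram_solve A w = gram_rhs A w"
    unfolding gram_solve_def by (rule iffD2[OF cramer[OF det_gram_nonzero[OF assms]]]) (rule refl)
  then have "A (axis i 1) \<bullet> (A (gram_solve A w) - w) = 0" for i
    using gram_mult_nth[OF assms(1), of "gram_solve A w" i]
    by (simp add: gram_rhs_def inner_diff_right)
  then have "A z \<bullet> (A (gram_solve A w) - w) = 0"
    using orthogonal_linear_if_orthogonal_basis[OF assms(1)] by blast
  then show ?thesis by (simp add: inner_diff_right)
qed

lemma gram_solve_unique:
  fixes A :: "real^'n \<Rightarrow> real^'m"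
  assumes "linear A" "inj A" and c: "\<And>z. A z \<bullet> A c = A z \<bullet> w"
  shows "gram_solve A w = c"
proof -
  have "A z \<bullet> A (gram_solve A w - c) = 0" for z
    using c inner_gram_solve[OF assms(1,2)] assms(1) by (simp add: linear_diff inner_diff_right)
  then have "A (gram_solve A w - c) \<bullet> A (gram_solve A w - c) = 0" by blast
  then have "A (gram_solve A w - c) = A 0" using assms(1) by (simp add: linear_0)
  then show ?thesis using assms(2) by (simp add: inj_eq)
qed

lemma normal_part_eq:
  fixes A :: "real^'n \<Rightarrow> real^'m"
  assumes "linear A" "inj A"
  shows "normal_part A w = w - A (gram_solve A w)"
  unfolding normal_part_def
proof (rule the_equality)
  have "(w - A (gram_solve A w)) \<bullet> A v = 0" for v
    using inner_gram_solve[OF assms, of v w] by (simp add: inner_diff_left inner_diff_right inner_commute[of _ "A v"])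
  then show "(\<forall>v. (w - A (gram_solve A w)) \<bullet> A v = 0) \<and> w - (w - A (gram_solve A w)) \<in> range A"
    by simp
next
  fix u assume u: "(\<forall>v. u \<bullet> A v = 0) \<and> w - u \<in> range A"
  then obtain c where "w - u = A c" by blast
  then have u_eq: "u = w - A c" by (simp add: algebra_simps)
  have "A z \<bullet> A c = A z \<bullet> w" for z
    using u u_eq inner_commute[of "A z"] by (simp add: inner_diff_left)
  then have "gram_solve A w = c" by (rule gram_solve_unique[OF assms])
  with u_eq show "u = w - A (gram_solve A w)" by simp
qed

lemma inner_normal_part:
  fixes A :: "real^'n \<Rightarrow> real^'m"
  assumes "linear A" "inj A" "\<And>v. \<eta> \<bullet> A v = 0"
  shows "normal_part A w \<bullet> \<eta> = w \<bullet> \<eta>"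
  using assms(3)[of "gram_solve A w"]
  by (simp add: normal_part_eq[OF assms(1,2)] inner_diff_left inner_diff_right inner_commute[of _ \<eta>])

lemma differentiable_inner_vector:
  "(f has_vector_derivative f') (at t) \<Longrightarrow> (g has_vector_derivative g') (at t) \<Longrightarrow>
   (\<lambda>t. f t \<bullet> g t) differentiable (at t)"
  by (rule differentiableI_vector, rule bounded_bilinear.has_vector_derivative[OF bounded_bilinear_inner])

lemma differentiable_gram_solve:
  fixes A :: "real \<Rightarrow> real^'n \<Rightarrow> real^'m"
  assumes A: "\<And>v. ((\<lambda>t. A t v) has_vector_derivative A' v) (at 0)" "det (gram (A 0)) \<noteq> 0"
    and w: "(w has_vector_derivative w') (at 0)"
  shows "(\<lambda>t. gram_solve (A t) (w t) $ k) differentiable (at 0)"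
proof -
  have gram: "(\<lambda>t. gram (A t) $ i $ j) differentiable (at 0)" for i j
    unfolding gram_def by (simp add: differentiable_inner_vector[OF A(1) A(1)])
  moreover have "(\<lambda>t. gram_rhs (A t) (w t) $ i) differentiable (at 0)" for i
    unfolding gram_rhs_def by (simp add: differentiable_inner_vector[OF A(1) w])
  ultimately have "(\<lambda>t. (\<chi> i j. if j = k then gram_rhs (A t) (w t) $ i else gram (A t) $ i $ j) $ i $ j)
      differentiable (at 0)" for i j
    by (cases "j = k") simp_all
  then show ?thesis
    unfolding gram_solve_def by (simp add: differentiable_divide differentiable_det gram A(2))
qed

lemma has_vector_derivative_normal_part:
  fixes A :: "real \<Rightarrow> real^'n \<Rightarrow> real^'m"
  assumes "open I" "0 \<in> I" and A: "\<And>t. t \<in> I \<Longrightarrow> linear (A t)" "\<And>t. t \<in> I \<Longrightarrow> inj (A t)"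
    and A': "\<And>v. ((\<lambda>t. A t v) has_vector_derivative A' v) (at 0)" "linear A'"
    and w: "(w has_vector_derivative w') (at 0)"
    and \<eta>: "\<And>v. \<eta> \<bullet> A 0 v = 0"
  shows "\<exists>D. ((\<lambda>t. normal_part (A t) (w t)) has_vector_derivative D) (at 0) \<and>
             D \<bullet> \<eta> = (w' - A' (gram_solve (A 0) (w 0))) \<bullet> \<eta>"
proof -
  define c where "c t = gram_solve (A t) (w t)" for t
  define c' where "c' k = deriv (\<lambda>t. c t $ k) 0" for k
  have c': "((\<lambda>t. c t $ k) has_field_derivative c' k) (at 0)" for k
    using differentiable_gram_solve[OF A'(1) det_gram_nonzero[OF A(1,2)[OF \<open>0 \<in> I\<close>]] w]
    unfolding c_def c'_def by (simp add: DERIV_deriv_iff_real_differentiable)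
  define D where "D = w' - (\<Sum>k\<in>UNIV. c 0 $ k *\<^sub>R A' (axis k 1) + c' k *\<^sub>R A 0 (axis k 1))"
  have "((\<lambda>t. w t - (\<Sum>k\<in>UNIV. c t $ k *\<^sub>R A t (axis k 1))) has_vector_derivative D) (at 0)"
    unfolding D_def
    by (intro has_vector_derivative_diff[OF w] has_vector_derivative_sum has_vector_derivative_scaleR[OF c' A'(1)])
  moreover have "w t - (\<Sum>k\<in>UNIV. c t $ k *\<^sub>R A t (axis k 1)) = normal_part (A t) (w t)" if "t \<in> I" for t
    using normal_part_eq[OF A[OF that], of "w t"] linear_basis_expansion[OF A(1)[OF that], of "c t"]
    by (simp add: c_def)
  ultimately have "((\<lambda>t. normal_part (A t) (w t)) has_vector_derivative D) (at 0)"
    by (rule has_vector_derivative_transform_within_open[OF _ \<open>open I\<close> \<open>0 \<in> I\<close>])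
  moreover have "D \<bullet> \<eta> = (w' - A' (c 0)) \<bullet> \<eta>"
  proof -
    have "A 0 v \<bullet> \<eta> = 0" for v using \<eta> by (simp add: inner_commute)
    then show ?thesis
      using linear_basis_expansion[OF A'(2), of "c 0"]
      by (simp add: D_def inner_diff_left inner_add_left inner_sum_left sum.distrib)
  qed
  ultimately show ?thesis unfolding c_def by blast
qed

locale smooth_variation =
  fixes F :: "real \<times> (real^'n) \<Rightarrow> real^'m" and I :: "real set" and U :: "(real^'n) set"
  assumes open_I: "open I" and open_U: "open U" and smooth: "smooth_on (I \<times> U) F"
begin

abbreviation DF :: "real \<times> (real^'n) \<Rightarrow> real \<times> (real^'n) \<Rightarrow> real^'m" where
  "DF q \<equiv> frechet_derivative F (at q)"

abbreviation D2 :: "real \<times> (real^'n) \<Rightarrow> real \<times> (real^'n) \<Rightarrow> real \<times> (real^'n) \<Rightarrow> real^'m" where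
  "D2 u q \<equiv> frechet_derivative (\<lambda>q. DF q u) (at q)"

abbreviation D3 :: "real \<times> (real^'n) \<Rightarrow> real \<times> (real^'n) \<Rightarrow> real \<times> (real^'n) \<Rightarrow> real \<times> (real^'n) \<Rightarrow> real^'m" where
  "D3 u v q \<equiv> frechet_derivative (\<lambda>q. D2 u q v) (at q)"

lemma open_domain: "open (I \<times> U)"
  using open_I open_U by (rule open_Times)

lemma smooth_DF: "smooth_on (I \<times> U) (\<lambda>q. DF q u)"
  by (rule smooth_on_frechet_derivative[OF open_domain smooth])

lemma has_derivative_DF: "q \<in> I \<times> U \<Longrightarrow> (F has_derivative DF q) (at q)"
  by (rule smooth_on_has_derivative[OF smooth])

lemma has_derivative_D2: "q \<in> I \<times> U \<Longrightarrow> ((\<lambda>q. DF q u) has_derivative D2 u q) (at q)"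
  by (rule smooth_on_has_derivative[OF smooth_DF])

lemma has_derivative_D3: "q \<in> I \<times> U \<Longrightarrow> ((\<lambda>q. D2 u q v) has_derivative D3 u v q) (at q)"
  by (rule smooth_on_has_derivative[OF smooth_on_frechet_derivative[OF open_domain smooth_DF]])

lemma D2_commute: "q \<in> I \<times> U \<Longrightarrow> D2 u q v = D2 v q u"
  by (rule smooth_on_frechet_derivative_commute[OF open_domain smooth])

lemma D3_commute_last: "q \<in> I \<times> U \<Longrightarrow> D3 u v q w = D3 u w q v"
  by (rule smooth_on_frechet_derivative_commute[OF open_domain smooth_DF])

lemma D3_commute_first:
  assumes "q \<in> I \<times> U"
  shows "D3 u v q w = D3 v u q w"
proof -
  have "frechet_derivative (\<lambda>q. D2 v q u) (at q) = D3 u v q"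
    by (rule frechet_derivative_eq_on_open[OF open_domain assms _ has_derivative_D3[OF assms]])
       (simp add: D2_commute)
  then show ?thesis by simp
qed

lemma linear_DF_snd: "q \<in> I \<times> U \<Longrightarrow> linear (\<lambda>v. DF q (0, v))"
  by (rule linear_partial_snd[OF has_derivative_linear[OF has_derivative_DF]])

lemma linear_D2_snd: "q \<in> I \<times> U \<Longrightarrow> linear (\<lambda>v. D2 u q (0, v))"
  by (rule linear_partial_snd[OF has_derivative_linear[OF has_derivative_D2]])

lemma linear_D3_snd: "q \<in> I \<times> U \<Longrightarrow> linear (\<lambda>v. D3 u w q (0, v))"
  by (rule linear_partial_snd[OF has_derivative_linear[OF has_derivative_D3]])

lemma dF_eq:
  assumes "t \<in> I" "y \<in> U"
  shows "dF F t y = (\<lambda>v. DF (t, y) (0, v))"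
proof -
  have "((\<lambda>y. F (t, y)) has_derivative (\<lambda>v. DF (t, y) (0, v))) (at y)"
    by (rule has_derivative_partial_snd[OF has_derivative_DF]) (simp add: assms)
  then show ?thesis
    unfolding dF_def by (simp add: frechet_derivative_at[symmetric])
qed

lemma linear_dF: "t \<in> I \<Longrightarrow> y \<in> U \<Longrightarrow> linear (dF F t y)"
  by (simp add: dF_eq linear_DF_snd)

lemma has_derivative_bending:
  assumes "0 \<in> I" "y \<in> U"
  shows "(bending F has_derivative (\<lambda>v. D2 (1, 0) (0, y) (0, v))) (at y)"
proof -
  have "bending F = (\<lambda>y. DF (0, y) (1, 0))"
    by (simp add: fun_eq_iff bending_def)
  then show ?thesis
    using has_derivative_partial_snd[OF has_derivative_D2] assms by simp
qed

lemma frechet_derivative_bending: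
  "0 \<in> I \<Longrightarrow> y \<in> U \<Longrightarrow> frechet_derivative (bending F) (at y) = (\<lambda>v. D2 (1, 0) (0, y) (0, v))"
  using frechet_derivative_at[OF has_derivative_bending] by simp

lemma linear_frechet_derivative_bending:
  "0 \<in> I \<Longrightarrow> y \<in> U \<Longrightarrow> linear (frechet_derivative (bending F) (at y))"
  by (simp add: frechet_derivative_bending linear_D2_snd)

lemma has_vector_derivative_dF:
  assumes "0 \<in> I" "x \<in> U"
  shows "((\<lambda>t. dF F t x v) has_vector_derivative frechet_derivative (bending F) (at x) v) (at 0)"
proof -
  have "((\<lambda>t. DF (t, x) (0, v)) has_vector_derivative D2 (0, v) (0, x) (1, 0)) (at 0)"
    by (rule has_vector_derivative_partial_fst[OF has_derivative_D2]) (simp add: assms)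
  then have "((\<lambda>t. DF (t, x) (0, v)) has_vector_derivative frechet_derivative (bending F) (at x) v) (at 0)"
    using D2_commute[of "(0, x)"] frechet_derivative_bending assms by simp
  then show ?thesis
    by (rule has_vector_derivative_transform_within_open[OF _ open_I \<open>0 \<in> I\<close>])
       (simp add: dF_eq \<open>x \<in> U\<close>)
qed

lemma Dir_dF_field:
  assumes "t \<in> I" "x \<in> U" "smooth_on U Y"
  shows "Dir (\<lambda>y. dF F t y (Y y)) X x = DF (t, x) (0, Dir Y X x) + D2 (0, Y x) (t, x) (0, X x)"
proof -
  have tx: "(t, x) \<in> I \<times> U" using assms by simp
  have "((\<lambda>y. DF (t, y) (0, Y y)) has_derivative
      (\<lambda>v. DF (t, x) (0, frechet_derivative Y (at x) v) + D2 (0, Y x) (t, x) (0, v))) (at x)"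
  proof (rule has_derivative_apply_linear_family[OF open_U \<open>x \<in> U\<close>])
    show "linear (\<lambda>v. DF (t, y) (0, v))" if "y \<in> U" for y
      using linear_DF_snd that assms by simp
    show "((\<lambda>y. DF (t, y) (0, u)) has_derivative (\<lambda>v. D2 (0, u) (t, x) (0, v))) (at x)" for u
      by (rule has_derivative_partial_snd[OF has_derivative_D2[OF tx]])
    show "linear (\<lambda>u. D2 (0, u) (t, x) (0, v))" for v
    proof -
      have "(\<lambda>u. D2 (0, u) (t, x) (0, v)) = (\<lambda>u. D2 (0, v) (t, x) (0, u))"
        by (rule ext) (rule D2_commute[OF tx])
      then show ?thesis using linear_D2_snd[OF tx] by simp
    qed
    show "(Y has_derivative frechet_derivative Y (at x)) (at x)"
      by (rule smooth_on_has_derivative[OF assms(3,2)])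
  qed
  then have "frechet_derivative (\<lambda>y. dF F t y (Y y)) (at x)
      = (\<lambda>v. DF (t, x) (0, frechet_derivative Y (at x) v) + D2 (0, Y x) (t, x) (0, v))"
    by (rule frechet_derivative_eq_on_open[OF open_U \<open>x \<in> U\<close>, rotated]) (simp add: dF_eq \<open>t \<in> I\<close>)
  then show ?thesis unfolding Dir_def by simp
qed

lemma Dir_Dir_bending:
  assumes "0 \<in> I" "x \<in> U" "smooth_on U Y"
  shows "Dir (Dir (bending F) Y) X x = D2 (1, 0) (0, x) (0, Dir Y X x) + D3 (1, 0) (0, Y x) (0, x) (0, X x)"
proof -
  have x0: "(0, x) \<in> I \<times> U" using assms by simp
  have "((\<lambda>y. D2 (1, 0) (0, y) (0, Y y)) has_derivative
      (\<lambda>v. D2 (1, 0) (0, x) (0, frechet_derivative Y (at x) v) + D3 (1, 0) (0, Y x) (0, x) (0, v))) (at x)"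
  proof (rule has_derivative_apply_linear_family[OF open_U \<open>x \<in> U\<close>])
    show "linear (\<lambda>v. D2 (1, 0) (0, y) (0, v))" if "y \<in> U" for y
      using linear_D2_snd that assms by simp
    show "((\<lambda>y. D2 (1, 0) (0, y) (0, u)) has_derivative (\<lambda>v. D3 (1, 0) (0, u) (0, x) (0, v))) (at x)" for u
      by (rule has_derivative_partial_snd[OF has_derivative_D3[OF x0]])
    show "linear (\<lambda>u. D3 (1, 0) (0, u) (0, x) (0, v))" for v
    proof -
      have "(\<lambda>u. D3 (1, 0) (0, u) (0, x) (0, v)) = (\<lambda>u. D3 (1, 0) (0, v) (0, x) (0, u))"
        by (rule ext) (rule D3_commute_last[OF x0])
      then show ?thesis using linear_D3_snd[OF x0] by simp
    qed
    show "(Y has_derivative frechet_derivative Y (at x)) (at x)"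
      by (rule smooth_on_has_derivative[OF assms(3,2)])
  qed
  then have "frechet_derivative (Dir (bending F) Y) (at x)
      = (\<lambda>v. D2 (1, 0) (0, x) (0, frechet_derivative Y (at x) v) + D3 (1, 0) (0, Y x) (0, x) (0, v))"
    by (rule frechet_derivative_eq_on_open[OF open_U \<open>x \<in> U\<close>, rotated])
       (simp add: Dir_def frechet_derivative_bending \<open>0 \<in> I\<close>)
  then show ?thesis unfolding Dir_def[of "Dir (bending F) Y"] by (simp add: Dir_def)
qed

text \<open>The third partial derivatives of F commute, so d/dt can be moved inside D_X D_Y.\<close>
lemma has_vector_derivative_Dir_dF_field:
  assumes "0 \<in> I" "x \<in> U" "smooth_on U Y"
  shows "((\<lambda>t. Dir (\<lambda>y. dF F t y (Y y)) X x) has_vector_derivative Dir (Dir (bending F) Y) X x) (at 0)"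
proof -
  have x0: "(0, x) \<in> I \<times> U" using assms by simp
  have "((\<lambda>t. DF (t, x) (0, Dir Y X x) + D2 (0, Y x) (t, x) (0, X x)) has_vector_derivative
      D2 (0, Dir Y X x) (0, x) (1, 0) + D3 (0, Y x) (0, X x) (0, x) (1, 0)) (at 0)"
    by (intro has_vector_derivative_add has_vector_derivative_partial_fst
          has_derivative_D2[OF x0] has_derivative_D3[OF x0])
  moreover have "D2 (0, Dir Y X x) (0, x) (1, 0) + D3 (0, Y x) (0, X x) (0, x) (1, 0)
      = Dir (Dir (bending F) Y) X x"
  proof -
    have "D3 (0, Y x) (0, X x) (0, x) (1, 0) = D3 (0, Y x) (1, 0) (0, x) (0, X x)"
      by (rule D3_commute_last[OF x0])
    also have "\<dots> = D3 (1, 0) (0, Y x) (0, x) (0, X x)"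
      by (rule D3_commute_first[OF x0])
    finally show ?thesis
      using Dir_Dir_bending[OF assms] D2_commute[OF x0, of "(0, Dir Y X x)"] by simp
  qed
  ultimately have "((\<lambda>t. DF (t, x) (0, Dir Y X x) + D2 (0, Y x) (t, x) (0, X x))
      has_vector_derivative Dir (Dir (bending F) Y) X x) (at 0)"
    by simp
  then show ?thesis
    by (rule has_vector_derivative_transform_within_open[OF _ open_I \<open>0 \<in> I\<close>])
       (simp add: Dir_dF_field assms)
qed

lemma frechet_derivative_gmet:
  assumes "0 \<in> I" "x \<in> U"
  shows "frechet_derivative (\<lambda>y. gmet F y a b) (at x) v
       = DF (0, x) (0, a) \<bullet> D2 (0, b) (0, x) (0, v) + D2 (0, a) (0, x) (0, v) \<bullet> DF (0, x) (0, b)"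
proof -
  have x0: "(0, x) \<in> I \<times> U" using assms by simp
  have "((\<lambda>y. DF (0, y) (0, a) \<bullet> DF (0, y) (0, b)) has_derivative
      (\<lambda>v. DF (0, x) (0, a) \<bullet> D2 (0, b) (0, x) (0, v) + D2 (0, a) (0, x) (0, v) \<bullet> DF (0, x) (0, b))) (at x)"
    by (intro has_derivative_inner has_derivative_partial_snd has_derivative_D2[OF x0])
  then have "frechet_derivative (\<lambda>y. gmet F y a b) (at x)
      = (\<lambda>v. DF (0, x) (0, a) \<bullet> D2 (0, b) (0, x) (0, v) + D2 (0, a) (0, x) (0, v) \<bullet> DF (0, x) (0, b))"
    by (rule frechet_derivative_eq_on_open[OF open_U \<open>x \<in> U\<close>, rotated])
       (simp add: gmet_def dF_eq \<open>0 \<in> I\<close>)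
  then show ?thesis by simp
qed

text \<open>The Christoffel symbol gives the tangential component of the second derivative of f.\<close>
lemma christoffel_eq_gram_solve:
  assumes "0 \<in> I" "x \<in> U" "inj (dF F 0 x)"
  shows "christoffel F x a b = gram_solve (dF F 0 x) (D2 (0, a) (0, x) (0, b))"
proof -
  have x0: "(0, x) \<in> I \<times> U" using assms by simp
  let ?A = "dF F 0 x" and ?B = "\<lambda>a b. D2 (0, a) (0, x) (0, b)"
  have koszul: "1 / 2 * (frechet_derivative (\<lambda>y. gmet F y b z) (at x) a
      + frechet_derivative (\<lambda>y. gmet F y a z) (at x) b
      - frechet_derivative (\<lambda>y. gmet F y a b) (at x) z) = ?A z \<bullet> ?B a b" for z
  proof -
    have "?B z a = ?B a z" "?B z b = ?B b z" "?B b a = ?B a b"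
      using D2_commute[OF x0] by blast+
    moreover have "?A b \<bullet> ?B a z = ?B a z \<bullet> ?A b" "?B a b \<bullet> ?A z = ?A z \<bullet> ?B a b"
      by (simp_all add: inner_commute)
    ultimately show ?thesis
      by (simp add: frechet_derivative_gmet assms dF_eq)
  qed
  have "christoffel F x a b = (THE u. \<forall>z. gmet F x u z = ?A z \<bullet> ?B a b)"
    unfolding christoffel_def koszul ..
  also have "\<dots> = gram_solve ?A (?B a b)"
  proof (rule the_equality)
    show "\<forall>z. gmet F x (gram_solve ?A (?B a b)) z = ?A z \<bullet> ?B a b"
      using inner_gram_solve[OF linear_dF assms(3)] assms(1,2)
      by (simp add: gmet_def inner_commute[of "?A (gram_solve ?A (?B a b))"])
    show "u = gram_solve ?A (?B a b)" if "\<forall>z. gmet F x u z = ?A z \<bullet> ?B a b" for u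
      using gram_solve_unique[OF linear_dF assms(3)] that assms(1,2)
      by (metis gmet_def inner_commute)
  qed
  finally show ?thesis .
qed

text \<open>The Gauss formula D_X f_*Y = f_*(nabla_X Y) + alpha(X, Y).\<close>
lemma LC_eq_gram_solve:
  assumes "0 \<in> I" "x \<in> U" "inj (dF F 0 x)" "smooth_on U Y"
  shows "LC F X Y x = gram_solve (dF F 0 x) (Dir (\<lambda>y. dF F 0 y (Y y)) X x)"
proof (rule gram_solve_unique[OF linear_dF[OF assms(1,2)] assms(3), symmetric])
  have x0: "(0, x) \<in> I \<times> U" using assms by simp
  let ?A = "dF F 0 x" and ?B = "D2 (0, X x) (0, x) (0, Y x)"
  fix z
  have "Dir (\<lambda>y. dF F 0 y (Y y)) X x = ?A (Dir Y X x) + ?B"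
    using Dir_dF_field[OF assms(1,2,4)] D2_commute[OF x0] dF_eq assms(1,2) by simp
  moreover have "?A z \<bullet> ?A (christoffel F x (X x) (Y x)) = ?A z \<bullet> ?B"
    using christoffel_eq_gram_solve[OF assms(1-3)] inner_gram_solve[OF linear_dF assms(3)] assms(1,2)
    by simp
  ultimately show "?A z \<bullet> ?A (LC F X Y x) = ?A z \<bullet> Dir (\<lambda>y. dF F 0 y (Y y)) X x"
    using linear_dF[OF assms(1,2)]
    by (simp add: LC_def Dir_def[of Y] linear_add inner_add_right)
qed

end

theorem mainTheorem3:
  fixes F :: "real \<times> (real^'n) \<Rightarrow> real^'m"
    and \<gamma> :: "real \<times> (real^'n) \<Rightarrow> real"
    and U :: "(real^'n) set" and \<epsilon> :: real
  assumes "open U" and "\<epsilon> > 0"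
    and F_smooth: "smooth_on ({-\<epsilon><..<\<epsilon>} \<times> U) F"
    and immersion: "\<And>t x. t \<in> {-\<epsilon><..<\<epsilon>} \<Longrightarrow> x \<in> U \<Longrightarrow> inj (dF F t x)"
    and \<gamma>_smooth: "smooth_on ({-\<epsilon><..<\<epsilon>} \<times> U) \<gamma>"
    and \<gamma>_pos: "\<And>t x. t \<in> {-\<epsilon><..<\<epsilon>} \<Longrightarrow> x \<in> U \<Longrightarrow> \<gamma> (t, x) > 0"
    and \<gamma>_0: "\<And>x. x \<in> U \<Longrightarrow> \<gamma> (0, x) = 1"
    and conformal: "\<And>X Y x. smooth_on U X \<Longrightarrow> smooth_on U Y \<Longrightarrow> x \<in> U \<Longrightarrow>
        ((\<lambda>t. \<gamma> (t, x) * (dF F t x (X x) \<bullet> dF F t x (Y x))) has_real_derivative 0) (at 0)"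
    and X: "smooth_on U X" and Y: "smooth_on U Y"
    and \<eta>: "smooth_on U \<eta>" and \<eta>_normal: "\<And>x v. x \<in> U \<Longrightarrow> \<eta> x \<bullet> dF F 0 x v = 0"
    and "x \<in> U"
  shows "\<exists>D. ((\<lambda>t. sff F t X Y x) has_vector_derivative D) (at 0) \<and>
             D \<bullet> \<eta> x = (betaT F \<gamma> X Y x + cfactor \<gamma> x *\<^sub>R sff F 0 X Y x) \<bullet> \<eta> x"
proof -
  define I where "I = {-\<epsilon><..<\<epsilon>}"
  interpret smooth_variation F I U
    using \<open>open U\<close> F_smooth by unfold_locales (simp_all add: I_def)
  have "0 \<in> I" using \<open>\<epsilon> > 0\<close> by (simp add: I_def)
  let ?A = "\<lambda>t. dF F t x" and ?w = "\<lambda>t. Dir (\<lambda>y. dF F t y (Y y)) X x" and ?T = "bending F"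
  have inj: "inj (?A t)" if "t \<in> I" for t
    using immersion that \<open>x \<in> U\<close> by (simp add: I_def)
  from has_vector_derivative_normal_part[OF open_I \<open>0 \<in> I\<close> linear_dF[OF _ \<open>x \<in> U\<close>] inj
      has_vector_derivative_dF[OF \<open>0 \<in> I\<close> \<open>x \<in> U\<close>]
      linear_frechet_derivative_bending[OF \<open>0 \<in> I\<close> \<open>x \<in> U\<close>]
      has_vector_derivative_Dir_dF_field[OF \<open>0 \<in> I\<close> \<open>x \<in> U\<close> Y] \<eta>_normal[OF \<open>x \<in> U\<close>]]
  obtain D where D: "((\<lambda>t. normal_part (?A t) (?w t)) has_vector_derivative D) (at 0)"
    and D_\<eta>: "D \<bullet> \<eta> x = (Dir (Dir ?T Y) X x - frechet_derivative ?T (at x) (gram_solve (?A 0) (?w 0))) \<bullet> \<eta> x"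
    by blast
  have "D \<bullet> \<eta> x = (Dir (Dir ?T Y) X x - Dir ?T (LC F X Y) x) \<bullet> \<eta> x"
    using D_\<eta> LC_eq_gram_solve[OF \<open>0 \<in> I\<close> \<open>x \<in> U\<close> inj[OF \<open>0 \<in> I\<close>] Y] by (simp add: Dir_def)
  also have "(Dir (Dir ?T Y) X x - Dir ?T (LC F X Y) x) \<bullet> \<eta> x
      = (betaT F \<gamma> X Y x + cfactor \<gamma> x *\<^sub>R sff F 0 X Y x) \<bullet> \<eta> x"
    using inner_normal_part[OF linear_dF[OF \<open>0 \<in> I\<close> \<open>x \<in> U\<close>] inj[OF \<open>0 \<in> I\<close>]] \<eta>_normal[OF \<open>x \<in> U\<close>]
    by (simp add: betaT_def nproj_eq_normal_part)
  finally show ?thesis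
    using D by (auto simp: sff_def nproj_eq_normal_part)
qed

end
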